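(* Let $\Gamma$ be any messageless secret-key code over the alphabet $\{0,1\}$ with codeword space $\{0,1\}^n$, $n\ge 1$, and let $\delta\in(0,1)$. If $\Gamma$ satisfies $\mathcal{F}^{\mathrm{ind}}_{\alpha n}$-tamper detection for $\alpha=(1+\delta)/2$, then $\Gamma$ does not satisfy soundness.
   Context: A messageless secret-key code over alphabet $\Sigma$ with codeword space $\Sigma^n$ is a triple of polynomial-time algorithms $\Gamma=(\mathsf{KGen},\mathsf{Enc},\mathsf{Dec})$: $\mathsf{KGen}(1^\lambda)$ is randomized and outputs a secret key $sk$; $\mathsf{Enc}(sk)$ (possibly randomized) outputs a codeword $\gamma\in\Sigma^n$; $\mathsf{Dec}(sk,\gamma)$ is deterministic and outputs one of $\mathtt{valid},\mathtt{invalid},\mathtt{tampered}$. A function $\nu(\lambda)$ is negligible, written $\mathsf{negl}(\lambda)$, if $\nu(\lambda)=o(\lambda^{-c})$ for every $c>0$. Soundness: for every fixed $\hat\gamma\in\Sigma^n$, $\Pr[\mathsf{Dec}(sk,\hat\gamma)\neq\mathtt{invalid} : sk\leftarrow\mathsf{KGen}(1^\lambda)]\le\mathsf{negl}(\lambda)$. $\mathcal{F}$-tamper detection, for a family $\mathcal{F}$ of (possibly randomized) functions $f:\Sigma^n\to\Sigma^n$: for every $f\in\mathcal{F}$, $\Pr[\mathsf{Dec}(sk,\tilde\gamma)\neq\mathtt{tampered}\wedge\tilde\gamma\neq\gamma : sk\leftarrow\mathsf{KGen}(1^\lambda);\ \gamma\leftarrow\mathsf{Enc}(sk);\ \tilde\gamma\leftarrow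 f(\gamma)]\le\mathsf{negl}(\lambda)$. $\mathcal{F}^{\mathrm{ind}}_{\alpha n}$ denotes the family of independent-tampering functions with rate $\alpha$: randomized length-preserving maps $f:\Sigma^n\to\Sigma^n$ that act independently on each coordinate, each coordinate being modified with probability at most $\alpha$. In particular (for $\Sigma=\{0,1\}$) it contains the map that, independently for each position $i$, replaces $\gamma_i$ by a uniformly random bit with probability $1/2$ and leaves it unchanged with probability $1/2$. *)

theory Defs
  imports "HOL-Probability.Probability" "HOL-Library.Landau_Symbols"
begin

datatype dec_result = Valid | Invalid | Tampered

definition negligible :: "(nat \<Rightarrow> real) \<Rightarrow> bool" where
  "negligible nu \<longleftrightarrow> (\<forall>c::real. c > 0 \<longrightarrow> nu \<in> o(\<lambda>l. inverse (real l powr c)))"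

fun ind_apply :: "(nat \<Rightarrow> bool \<Rightarrow> bool pmf) \<Rightarrow> nat \<Rightarrow> bool list \<Rightarrow> bool list pmf" where
  "ind_apply ch i [] = return_pmf []"
| "ind_apply ch i (b # bs) =
     bind_pmf (ch i b) (\<lambda>b'. bind_pmf (ind_apply ch (Suc i) bs) (\<lambda>bs'. return_pmf (b' # bs')))"

definition ind_tamper_family :: "nat \<Rightarrow> real \<Rightarrow> (bool list \<Rightarrow> bool list pmf) set" where
  "ind_tamper_family n \<alpha> =
     {f. \<exists>ch. (\<forall>i<n. \<forall>b. measure_pmf.prob (ch i b) {b'. b' \<noteq> b} \<le> \<alpha>) \<and>
              (\<forall>\<gamma>. length \<gamma> = n \<longrightarrow> f \<gamma> = ind_apply ch 0 \<gamma>)}"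

text \<open>A messageless secret-key code: KGen l (keys), Enc l sk (codewords in {0,1}^(n l)),
  Dec l sk (deterministic).\<close>
definition is_code :: "(nat \<Rightarrow> nat) \<Rightarrow> (nat \<Rightarrow> 'k \<Rightarrow> bool list pmf) \<Rightarrow> bool" where
  "is_code n Enc \<longleftrightarrow> (\<forall>l sk \<gamma>. \<gamma> \<in> set_pmf (Enc l sk) \<longrightarrow> length \<gamma> = n l)"

definition sound ::
  "(nat \<Rightarrow> nat) \<Rightarrow> (nat \<Rightarrow> 'k pmf) \<Rightarrow> (nat \<Rightarrow> 'k \<Rightarrow> bool list \<Rightarrow> dec_result) \<Rightarrow> bool" where
  "sound n KGen Dec \<longleftrightarrow>
     (\<forall>\<gamma>h :: nat \<Rightarrow> bool list. (\<forall>l. length (\<gamma>h l) = n l) \<longrightarrow>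
        negligible (\<lambda>l. measure_pmf.prob (KGen l) {sk. Dec l sk (\<gamma>h l) \<noteq> Invalid}))"

definition tamper_exp ::
  "(nat \<Rightarrow> 'k pmf) \<Rightarrow> (nat \<Rightarrow> 'k \<Rightarrow> bool list pmf) \<Rightarrow> (nat \<Rightarrow> 'k \<Rightarrow> bool list \<Rightarrow> dec_result)
   \<Rightarrow> (nat \<Rightarrow> bool list \<Rightarrow> bool list pmf) \<Rightarrow> nat \<Rightarrow> bool pmf" where
  "tamper_exp KGen Enc Dec f l =
     bind_pmf (KGen l) (\<lambda>sk. bind_pmf (Enc l sk) (\<lambda>\<gamma>. bind_pmf (f l \<gamma>) (\<lambda>\<gamma>'.
       return_pmf (Dec l sk \<gamma>' \<noteq> Tampered \<and> \<gamma>' \<noteq> \<gamma>))))"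

definition ind_tamper_detecting ::
  "(nat \<Rightarrow> nat) \<Rightarrow> real \<Rightarrow> (nat \<Rightarrow> 'k pmf) \<Rightarrow> (nat \<Rightarrow> 'k \<Rightarrow> bool list pmf)
   \<Rightarrow> (nat \<Rightarrow> 'k \<Rightarrow> bool list \<Rightarrow> dec_result) \<Rightarrow> bool" where
  "ind_tamper_detecting n \<alpha> KGen Enc Dec \<longleftrightarrow>
     (\<forall>f :: nat \<Rightarrow> bool list \<Rightarrow> bool list pmf. (\<forall>l. f l \<in> ind_tamper_family (n l) \<alpha>) \<longrightarrow>
        negligible (\<lambda>l. pmf (tamper_exp KGen Enc Dec f l) True))"

end

theory Submission
  imports Defs
begin

(* Tamper with the channel that replaces every bit by a fresh uniform bit: it modifies each
   coordinate with probability 1/2 <= alpha, and its output U is uniform on {0,1}^n whatever the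
   codeword gamma was. A modification goes undetected unless U = gamma (probability at most 1/2)
   or Dec sk U = tampered, which in particular is not invalid. So tamper detection forces
   Pr[Dec sk U <> invalid] >= 1/2 - negl; by averaging over U, the string most often accepted
   by a random key is not rejected with probability at least 1/2 - negl, contradicting
   soundness. *)

lemma negligible_LIMSEQ_zero:
  assumes "negligible \<nu>"
  shows "\<nu> \<longlonglongrightarrow> 0"
proof -
  have "\<nu> \<in> o(\<lambda>l. inverse (real l))"
    using assms[unfolded negligible_def, rule_format, of 1] by simp
  also have "(\<lambda>l. inverse (real l)) \<in> O(\<lambda>_. 1)"
    by (intro bigoI[of _ 1]) (auto intro!: eventually_mono[OF eventually_ge_at_top[of 1]] simp: inverse_le_1_iff)
  finally show ?thesis
    using smalloD_tendsto[of \<nu> at_top "\<lambda>_. 1"] by simp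
qed

lemma negligible_add:
  "negligible \<mu> \<Longrightarrow> negligible \<nu> \<Longrightarrow> negligible (\<lambda>l. \<mu> l + \<nu> l)"
  unfolding negligible_def by (simp add: sum_in_smallo)

lemma negligible_ex_less:
  assumes "negligible \<nu>" and "0 < c"
  shows "\<exists>l. \<nu> l < c"
  using order_tendstoD(2)[OF negligible_LIMSEQ_zero[OF assms(1)] assms(2)]
  by (auto dest: eventually_happens)

lemma pmf_bind_return_True:
  "pmf (bind_pmf p (\<lambda>x. return_pmf (P x))) True = measure_pmf.prob p {x. P x}"
  by (simp add: map_pmf_def[symmetric] pmf_map vimage_def)

lemma integral_prob_commute:
  fixes p :: "'a pmf" and q :: "'b pmf"
  shows "(\<integral>x. measure_pmf.prob q {y. P x y} \<partial>p) = (\<integral>y. measure_pmf.prob p {x. P x y} \<partial>q)"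
proof -
  have "(\<integral>x. measure_pmf.prob q {y. P x y} \<partial>p)
      = pmf (bind_pmf p (\<lambda>x. bind_pmf q (\<lambda>y. return_pmf (P x y)))) True"
    by (simp add: pmf_bind[of p] pmf_bind_return_True)
  also have "\<dots> = pmf (bind_pmf q (\<lambda>y. bind_pmf p (\<lambda>x. return_pmf (P x y)))) True"
    by (subst bind_commute_pmf) (rule refl)
  also have "\<dots> = (\<integral>y. measure_pmf.prob p {x. P x y} \<partial>q)"
    by (simp add: pmf_bind[of q] pmf_bind_return_True)
  finally show ?thesis .
qed

lemma integrable_measure_pmf_prob:
  "integrable (measure_pmf p) (\<lambda>x. measure_pmf.prob (q x) (A x))"
  by (rule measure_pmf.integrable_const_bound[where B = 1]) auto

lemma integrable_measure_pmf_pmf: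
  "integrable (measure_pmf p) (\<lambda>x. pmf (q x) y)"
  by (rule measure_pmf.integrable_const_bound[where B = 1]) (auto simp: pmf_le_1)

lemma ex_max_on_lists_length:
  fixes g :: "'a::finite list \<Rightarrow> 'b::linorder"
  shows "\<exists>u. length u = n \<and> (\<forall>v. length v = n \<longrightarrow> g v \<le> g u)"
proof -
  let ?S = "{u :: 'a list. length u = n}"
  have fin: "finite (g ` ?S)"
    using finite_lists_length_eq[of "UNIV :: 'a set" n] by simp
  have "replicate n undefined \<in> ?S" by simp
  then have "Max (g ` ?S) \<in> g ` ?S"
    using Max_in[OF fin] by blast
  then obtain u where "u \<in> ?S" "g u = Max (g ` ?S)" by auto
  then show ?thesis
    using fin by auto
qed

lemma length_ind_apply: "ys \<in> set_pmf (ind_apply ch i xs) \<Longrightarrow> length ys = length xs"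
  by (induction xs arbitrary: i ys) auto

lemma ind_apply_input_oblivious:
  "length xs = length ys \<Longrightarrow> ind_apply (\<lambda>i _. p i) i xs = ind_apply (\<lambda>i _. p i) i ys"
proof (induction xs arbitrary: i ys)
  case (Cons x xs)
  then obtain y ys' where "ys = y # ys'" "length xs = length ys'"
    by (cases ys) auto
  then show ?case using Cons.IH[of ys' "Suc i"] by simp
qed simp

lemma pmf_ind_apply_Cons:
  "pmf (ind_apply ch i (b # bs)) (c # cs) = pmf (ch i b) c * pmf (ind_apply ch (Suc i) bs) cs"
proof -
  have "pmf (ind_apply ch i (b # bs)) (c # cs)
      = (\<integral>b'. pmf (map_pmf (Cons b') (ind_apply ch (Suc i) bs)) (c # cs) \<partial>ch i b)"
    by (simp add: pmf_bind[of "ch i b"] map_pmf_def)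
  also have "\<dots> = (\<integral>b'. indicator {c} b' * pmf (ind_apply ch (Suc i) bs) cs \<partial>ch i b)"
  proof (intro Bochner_Integration.integral_cong refl)
    fix b'
    show "pmf (map_pmf (Cons b') (ind_apply ch (Suc i) bs)) (c # cs)
        = indicator {c} b' * pmf (ind_apply ch (Suc i) bs) cs"
    proof (cases "b' = c")
      case True
      then show ?thesis by (simp add: pmf_map_inj')
    next
      case False
      then show ?thesis by (subst pmf_map_outside) auto
    qed
  qed
  finally show ?thesis by (simp add: measure_pmf_single)
qed

lemma pmf_ind_apply_le:
  assumes "\<And>b c. pmf (ch i b) c \<le> q" and "xs \<noteq> []"
  shows "pmf (ind_apply ch i xs) ys \<le> q"
proof (cases "length ys = length xs")
  case True
  with assms(2) obtain x xs' y ys' where "xs = x # xs'" "ys = y # ys'"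
    by (cases xs; cases ys) auto
  then have "pmf (ind_apply ch i xs) ys = pmf (ch i x) y * pmf (ind_apply ch (Suc i) xs') ys'"
    by (simp only: pmf_ind_apply_Cons)
  also have "\<dots> \<le> pmf (ch i x) y"
    by (simp add: mult_left_le pmf_le_1)
  finally show ?thesis using assms(1) by (rule order_trans)
next
  case False
  then have "pmf (ind_apply ch i xs) ys = 0"
    by (auto simp: pmf_eq_0_set_pmf dest: length_ind_apply)
  then show ?thesis using assms(1) pmf_nonneg order_trans by metis
qed

definition uniform_channel :: "nat \<Rightarrow> bool \<Rightarrow> bool pmf" where
  "uniform_channel i b = bernoulli_pmf (1/2)"

lemma ind_apply_uniform_channel_in_ind_tamper_family:
  assumes "1/2 \<le> \<alpha>"
  shows "ind_apply uniform_channel 0 \<in> ind_tamper_family n \<alpha>"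
proof -
  have "measure_pmf.prob (uniform_channel i b) {b'. b' \<noteq> b} \<le> \<alpha>" for i b
  proof -
    have "{b'. b' \<noteq> b} = {\<not> b}" by auto
    then show ?thesis using assms by (simp add: uniform_channel_def measure_pmf_single)
  qed
  then show ?thesis
    unfolding ind_tamper_family_def by (intro CollectI exI[of _ uniform_channel]) auto
qed

lemma prob_undetected_modification_ge:
  fixes U :: "'a pmf" and d :: "'a \<Rightarrow> dec_result"
  shows "1 - pmf U \<gamma> - measure_pmf.prob U {u. d u \<noteq> Invalid}
    \<le> measure_pmf.prob U {u. d u \<noteq> Tampered \<and> u \<noteq> \<gamma>}"
proof -
  have "1 - pmf U \<gamma> = measure_pmf.prob U {u. u \<noteq> \<gamma>}"
    using measure_pmf.prob_compl[of "{\<gamma>}" U] by (simp add: measure_pmf_single set_diff_eq)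
  also have "\<dots> \<le> measure_pmf.prob U ({u. d u \<noteq> Tampered \<and> u \<noteq> \<gamma>} \<union> {u. d u \<noteq> Invalid})"
    by (rule measure_pmf.finite_measure_mono) auto
  also have "\<dots> \<le> measure_pmf.prob U {u. d u \<noteq> Tampered \<and> u \<noteq> \<gamma>} + measure_pmf.prob U {u. d u \<noteq> Invalid}"
    by (rule measure_subadditive) auto
  finally show ?thesis by simp
qed

lemma tamper_exp_oblivious_ge:
  assumes oblivious: "\<And>sk \<gamma>. \<gamma> \<in> set_pmf (Enc l sk) \<Longrightarrow> f l \<gamma> = U"
    and spread: "\<And>\<gamma>. pmf U \<gamma> \<le> \<epsilon>"
    and accept: "\<And>u. u \<in> set_pmf U \<Longrightarrow> measure_pmf.prob (KGen l) {sk. Dec l sk u \<noteq> Invalid} \<le> S"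
  shows "1 - \<epsilon> - S \<le> pmf (tamper_exp KGen Enc Dec f l) True"
proof -
  define undetected where
    "undetected sk \<gamma> = measure_pmf.prob U {u. Dec l sk u \<noteq> Tampered \<and> u \<noteq> \<gamma>}" for sk \<gamma>
  define acc where "acc sk = measure_pmf.prob U {u. Dec l sk u \<noteq> Invalid}" for sk
  have "tamper_exp KGen Enc Dec f l = bind_pmf (KGen l) (\<lambda>sk. bind_pmf (Enc l sk) (\<lambda>\<gamma>.
      bind_pmf U (\<lambda>u. return_pmf (Dec l sk u \<noteq> Tampered \<and> u \<noteq> \<gamma>))))"
    unfolding tamper_exp_def by (intro bind_pmf_cong refl) (simp add: oblivious)
  then have tamper_prob: "pmf (tamper_exp KGen Enc Dec f l) True
      = (\<integral>sk. (\<integral>\<gamma>. undetected sk \<gamma> \<partial>Enc l sk) \<partial>KGen l)"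
    by (simp add: pmf_bind[of "KGen l"] pmf_bind[of "Enc l _"] pmf_bind_return_True undetected_def)
  have "(\<integral>sk. acc sk \<partial>KGen l) = (\<integral>u. measure_pmf.prob (KGen l) {sk. Dec l sk u \<noteq> Invalid} \<partial>U)"
    unfolding acc_def by (rule integral_prob_commute)
  also have "\<dots> \<le> (\<integral>u. S \<partial>U)"
    by (intro integral_mono_AE integrable_measure_pmf_prob AE_pmfI accept) simp
  finally have "1 - \<epsilon> - S \<le> (\<integral>sk. 1 - \<epsilon> - acc sk \<partial>KGen l)"
    by (simp add: acc_def integrable_measure_pmf_prob)
  also have "\<dots> \<le> (\<integral>sk. (\<integral>\<gamma>. undetected sk \<gamma> \<partial>Enc l sk) \<partial>KGen l)"
  proof (rule integral_mono)
    show "integrable (KGen l) (\<lambda>sk. 1 - \<epsilon> - acc sk)"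
      unfolding acc_def by (simp add: integrable_measure_pmf_prob)
    show "integrable (KGen l) (\<lambda>sk. \<integral>\<gamma>. undetected sk \<gamma> \<partial>Enc l sk)"
      using integrable_measure_pmf_pmf[of "KGen l" "\<lambda>sk. bind_pmf (Enc l sk) (\<lambda>\<gamma>.
          bind_pmf U (\<lambda>u. return_pmf (Dec l sk u \<noteq> Tampered \<and> u \<noteq> \<gamma>)))" True]
      by (simp add: pmf_bind[of "Enc l _"] pmf_bind_return_True undetected_def)
    fix sk
    have "1 - \<epsilon> - acc sk \<le> undetected sk \<gamma>" for \<gamma>
      using prob_undetected_modification_ge[of U \<gamma> "Dec l sk"] spread[of \<gamma>]
      unfolding undetected_def acc_def by linarith
    then have "(\<integral>\<gamma>. 1 - \<epsilon> - acc sk \<partial>Enc l sk) \<le> (\<integral>\<gamma>. undetected sk \<gamma> \<partial>Enc l sk)"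
      unfolding undetected_def by (intro integral_mono integrable_measure_pmf_prob) simp_all
    then show "1 - \<epsilon> - acc sk \<le> (\<integral>\<gamma>. undetected sk \<gamma> \<partial>Enc l sk)"
      by simp
  qed
  finally show ?thesis
    using tamper_prob by simp
qed

lemma ind_tamper_detecting_uniform_channel:
  assumes "ind_tamper_detecting n \<alpha> KGen Enc Dec" and "1/2 \<le> \<alpha>"
  shows "negligible (\<lambda>l. pmf (tamper_exp KGen Enc Dec (\<lambda>_. ind_apply uniform_channel 0) l) True)"
  using assms(1)[unfolded ind_tamper_detecting_def, rule_format, of "\<lambda>_. ind_apply uniform_channel 0",
      OF ind_apply_uniform_channel_in_ind_tamper_family[OF assms(2)]] .

lemma tamper_exp_uniform_channel_ge:
  assumes "is_code n Enc" and "1 \<le> n l"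
    and accept: "\<And>u. length u = n l \<Longrightarrow> measure_pmf.prob (KGen l) {sk. Dec l sk u \<noteq> Invalid} \<le> S"
  shows "1/2 - S \<le> pmf (tamper_exp KGen Enc Dec (\<lambda>_. ind_apply uniform_channel 0) l) True"
proof -
  let ?U = "ind_apply uniform_channel 0 (replicate (n l) True)"
  have "1 - 1/2 - S \<le> pmf (tamper_exp KGen Enc Dec (\<lambda>_. ind_apply uniform_channel 0) l) True"
  proof (rule tamper_exp_oblivious_ge)
    show "ind_apply uniform_channel 0 \<gamma> = ?U" if "\<gamma> \<in> set_pmf (Enc l sk)" for sk \<gamma>
      using that assms(1) unfolding is_code_def uniform_channel_def[abs_def]
      by (intro ind_apply_input_oblivious) simp
    show "pmf ?U u \<le> 1/2" for u
      using assms(2) by (intro pmf_ind_apply_le) (auto simp: uniform_channel_def)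
    show "measure_pmf.prob (KGen l) {sk. Dec l sk u \<noteq> Invalid} \<le> S" if "u \<in> set_pmf ?U" for u
      using accept length_ind_apply[OF that] by simp
  qed
  then show ?thesis by simp
qed

theorem mainTheorem2:
  fixes n :: "nat \<Rightarrow> nat"
    and KGen :: "nat \<Rightarrow> 'k pmf"
    and Enc :: "nat \<Rightarrow> 'k \<Rightarrow> bool list pmf"
    and Dec :: "nat \<Rightarrow> 'k \<Rightarrow> bool list \<Rightarrow> dec_result"
    and \<delta> :: real
  assumes "\<forall>l. n l \<ge> 1"
    and "is_code n Enc"
    and "0 < \<delta>" and "\<delta> < 1"
    and "ind_tamper_detecting n ((1 + \<delta>) / 2) KGen Enc Dec"
  shows "\<not> sound n KGen Dec"
proof
  assume "sound n KGen Dec"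
  define val where "val l u = measure_pmf.prob (KGen l) {sk. Dec l sk u \<noteq> Invalid}" for l u
  define tamper where
    "tamper l = pmf (tamper_exp KGen Enc Dec (\<lambda>_. ind_apply uniform_channel 0) l) True" for l
  have "\<forall>l. \<exists>u. length u = n l \<and> (\<forall>v. length v = n l \<longrightarrow> val l v \<le> val l u)"
    by (intro allI ex_max_on_lists_length)
  then obtain \<gamma>h where "\<forall>l. length (\<gamma>h l) = n l \<and> (\<forall>v. length v = n l \<longrightarrow> val l v \<le> val l (\<gamma>h l))"
    by (rule choice[THEN exE])
  then have len: "\<And>l. length (\<gamma>h l) = n l"
    and max: "\<And>l v. length v = n l \<Longrightarrow> val l v \<le> val l (\<gamma>h l)"
    by simp_all
  have "negligible (\<lambda>l. tamper l + val l (\<gamma>h l))"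
    unfolding tamper_def val_def
    using assms(3) by (intro negligible_add ind_tamper_detecting_uniform_channel[OF assms(5)]
        \<open>sound n KGen Dec\<close>[unfolded sound_def, rule_format, OF len]) simp
  from negligible_ex_less[OF this, of "1/2"]
  obtain l where "tamper l + val l (\<gamma>h l) < 1/2"
    by auto
  moreover have "1/2 - val l (\<gamma>h l) \<le> tamper l"
    unfolding tamper_def val_def using assms(1,2) max[unfolded val_def]
    by (intro tamper_exp_uniform_channel_ge) auto
  ultimately show False by simp
qed

end
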